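(* Let $R$ be a nonzero ring and $*\in\{l,r,\emptyset\}$. Then the set $\mathbb{L}_*(R)$ has maximal elements with respect to inclusion, i.e. $\max\mathbb{L}_*(R)\neq\emptyset$.
   Context: Rings are associative with $1$. A multiplicative set $S\subseteq R$: $SS\subseteq S$, $1\in S$, $0\notin S$. $R\langle S^{-1}\rangle=R\langle X_S\rangle/I_S$, where $R\langle X_S\rangle$ is freely generated by $R$ and noncommuting indeterminates $x_s$ ($s\in S$) and $I_S$ is generated by $sx_s-1,x_ss-1$. $S$ is left localizable if $R\langle S^{-1}\rangle\ne0$ and every element is of the form $(x_s+I_S)(r+I_S)$; right localizable if $R\langle S^{-1}\rangle\ne0$ and every element is of the form $(r+I_S)(x_s+I_S)$ ($s\in S,r\in R$); localizable if both. $\mathbb{L}_l(R)$, $\mathbb{L}_r(R)$, $\mathbb{L}_\emptyset(R)$ are the sets of left localizable, right localizable, localizable sets. *)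

theory Defs
  imports Main
begin

text \<open>Terms of the free ring generated by the elements of R and noncommuting
indeterminates x_s.  Constructor C r stands for r, X s for x_s.\<close>
datatype 'a rterm = C 'a | X 'a | TZero | TOne
  | TAdd "'a rterm" "'a rterm" | TNeg "'a rterm" | TMul "'a rterm" "'a rterm"

fun wf_term :: "'a set \<Rightarrow> 'a rterm \<Rightarrow> bool" where
  "wf_term S (C r) = True"
| "wf_term S (X s) = (s \<in> S)"
| "wf_term S TZero = True"
| "wf_term S TOne = True"
| "wf_term S (TAdd a b) = (wf_term S a \<and> wf_term S b)"
| "wf_term S (TNeg a) = wf_term S a"
| "wf_term S (TMul a b) = (wf_term S a \<and> wf_term S b)"

text \<open>The congruence whose quotient is R<S^-1> = R<X_S>/I_S: ring axioms,
the relations of R (R is a subring of R<X_S>), and s x_s = 1 = x_s s.\<close>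
inductive loc_eq :: "('a::ring_1) set \<Rightarrow> 'a rterm \<Rightarrow> 'a rterm \<Rightarrow> bool" for S where
  refl: "loc_eq S a a"
| sym: "loc_eq S a b \<Longrightarrow> loc_eq S b a"
| trans: "loc_eq S a b \<Longrightarrow> loc_eq S b c \<Longrightarrow> loc_eq S a c"
| cong_add: "loc_eq S a a' \<Longrightarrow> loc_eq S b b' \<Longrightarrow> loc_eq S (TAdd a b) (TAdd a' b')"
| cong_neg: "loc_eq S a a' \<Longrightarrow> loc_eq S (TNeg a) (TNeg a')"
| cong_mul: "loc_eq S a a' \<Longrightarrow> loc_eq S b b' \<Longrightarrow> loc_eq S (TMul a b) (TMul a' b')"
| add_assoc: "loc_eq S (TAdd (TAdd a b) c) (TAdd a (TAdd b c))"
| add_comm: "loc_eq S (TAdd a b) (TAdd b a)"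
| add_zero: "loc_eq S (TAdd TZero a) a"
| add_neg: "loc_eq S (TAdd (TNeg a) a) TZero"
| mul_assoc: "loc_eq S (TMul (TMul a b) c) (TMul a (TMul b c))"
| mul_one_l: "loc_eq S (TMul TOne a) a"
| mul_one_r: "loc_eq S (TMul a TOne) a"
| distr_l: "loc_eq S (TMul a (TAdd b c)) (TAdd (TMul a b) (TMul a c))"
| distr_r: "loc_eq S (TMul (TAdd a b) c) (TAdd (TMul a c) (TMul b c))"
| C_add: "loc_eq S (C (r + r')) (TAdd (C r) (C r'))"
| C_mul: "loc_eq S (C (r * r')) (TMul (C r) (C r'))"
| C_one: "loc_eq S (C 1) TOne"
| C_zero: "loc_eq S (C 0) TZero"
| inv_r: "s \<in> S \<Longrightarrow> loc_eq S (TMul (C s) (X s)) TOne"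
| inv_l: "s \<in> S \<Longrightarrow> loc_eq S (TMul (X s) (C s)) TOne"

definition mult_set :: "('a::ring_1) set \<Rightarrow> bool" where
  "mult_set S \<longleftrightarrow> (\<forall>a\<in>S. \<forall>b\<in>S. a * b \<in> S) \<and> 1 \<in> S \<and> 0 \<notin> S"

definition loc_nonzero :: "('a::ring_1) set \<Rightarrow> bool" where
  "loc_nonzero S \<longleftrightarrow> \<not> loc_eq S TOne TZero"

definition left_localizable :: "('a::ring_1) set \<Rightarrow> bool" where
  "left_localizable S \<longleftrightarrow> mult_set S \<and> loc_nonzero S \<and>
     (\<forall>t. wf_term S t \<longrightarrow> (\<exists>s\<in>S. \<exists>r. loc_eq S t (TMul (X s) (C r))))"

definition right_localizable :: "('a::ring_1) set \<Rightarrow> bool" where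
  "right_localizable S \<longleftrightarrow> mult_set S \<and> loc_nonzero S \<and>
     (\<forall>t. wf_term S t \<longrightarrow> (\<exists>s\<in>S. \<exists>r. loc_eq S t (TMul (C r) (X s))))"

datatype side = Lside | Rside | Bside

definition Loc :: "side \<Rightarrow> ('a::ring_1) set set" where
  "Loc k = (case k of
      Lside \<Rightarrow> {S. left_localizable S}
    | Rside \<Rightarrow> {S. right_localizable S}
    | Bside \<Rightarrow> {S. left_localizable S \<and> right_localizable S})"

definition max_elems :: "'b set set \<Rightarrow> 'b set set" where
  "max_elems F = {S\<in>F. \<forall>T\<in>F. S \<subseteq> T \<longrightarrow> T = S}"

end

theory Submission
  imports Defs
begin

text \<open>The conditions defining left, right and two-sided localizability only involve finitely
many elements of S at a time: a derivation of loc_eq S, or a term over S, uses finitely many x_s.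
Hence each of these classes is closed under unions of nonempty chains, and Zorn's lemma applies.
The classes are nonempty since a multiplicative set of units, such as {1}, is localizable:
R<S^-1> is then R itself, evaluation of terms being the isomorphism.\<close>

declare loc_eq.trans [trans]

lemma loc_eq_mono: "loc_eq S a b \<Longrightarrow> S \<subseteq> T \<Longrightarrow> loc_eq T a b"
  by (induction rule: loc_eq.induct) (auto intro: loc_eq.intros)

lemma wf_term_mono: "wf_term S t \<Longrightarrow> S \<subseteq> T \<Longrightarrow> wf_term T t"
  by (induction t) auto

lemma loc_eq_finite_support:
  "loc_eq S a b \<Longrightarrow> \<exists>F. finite F \<and> F \<subseteq> S \<and> loc_eq F a b"
proof (induction rule: loc_eq.induct)
  case (trans a b c)
  then obtain F G where "finite F" "F \<subseteq> S" "loc_eq F a b" "finite G" "G \<subseteq> S" "loc_eq G b c"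
    by blast
  then show ?case
    by (intro exI[of _ "F \<union> G"]) (auto intro: loc_eq.trans loc_eq_mono)
next
  case (cong_add a a' b b')
  then obtain F G where "finite F" "F \<subseteq> S" "loc_eq F a a'" "finite G" "G \<subseteq> S" "loc_eq G b b'"
    by blast
  then show ?case
    by (intro exI[of _ "F \<union> G"]) (auto intro: loc_eq.cong_add loc_eq_mono)
next
  case (cong_mul a a' b b')
  then obtain F G where "finite F" "F \<subseteq> S" "loc_eq F a a'" "finite G" "G \<subseteq> S" "loc_eq G b b'"
    by blast
  then show ?case
    by (intro exI[of _ "F \<union> G"]) (auto intro: loc_eq.cong_mul loc_eq_mono)
next
  case (inv_r s)
  then show ?case by (intro exI[of _ "{s}"]) (auto intro: loc_eq.inv_r)
next
  case (inv_l s)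
  then show ?case by (intro exI[of _ "{s}"]) (auto intro: loc_eq.inv_l)
qed (auto intro: loc_eq.intros)

lemma wf_term_finite_support:
  "wf_term S t \<Longrightarrow> \<exists>F. finite F \<and> F \<subseteq> S \<and> wf_term F t"
proof (induction t)
  case (X s)
  then show ?case by (intro exI[of _ "{s}"]) auto
next
  case (TAdd a b)
  then obtain F G where "finite F" "F \<subseteq> S" "wf_term F a" "finite G" "G \<subseteq> S" "wf_term G b"
    by auto
  then show ?case by (intro exI[of _ "F \<union> G"]) (auto intro: wf_term_mono)
next
  case (TMul a b)
  then obtain F G where "finite F" "F \<subseteq> S" "wf_term F a" "finite G" "G \<subseteq> S" "wf_term G b"
    by auto
  then show ?case by (intro exI[of _ "F \<union> G"]) (auto intro: wf_term_mono)
qed auto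

lemma loc_eq_Union_chain:
  assumes "loc_eq (\<Union>\<C>) a b" "\<C> \<noteq> {}" "subset.chain \<A> \<C>"
  obtains S where "S \<in> \<C>" "loc_eq S a b"
proof -
  obtain F where F: "finite F" "F \<subseteq> \<Union>\<C>" "loc_eq F a b"
    using loc_eq_finite_support[OF assms(1)] by blast
  then obtain S where "S \<in> \<C>" "F \<subseteq> S"
    using finite_subset_Union_chain assms(2,3) by metis
  with F(3) show thesis using loc_eq_mono that by blast
qed

lemma wf_term_Union_chain:
  assumes "wf_term (\<Union>\<C>) t" "\<C> \<noteq> {}" "subset.chain \<A> \<C>"
  obtains S where "S \<in> \<C>" "wf_term S t"
proof -
  obtain F where F: "finite F" "F \<subseteq> \<Union>\<C>" "wf_term F t"
    using wf_term_finite_support[OF assms(1)] by blast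
  then obtain S where "S \<in> \<C>" "F \<subseteq> S"
    using finite_subset_Union_chain assms(2,3) by metis
  with F(3) show thesis using wf_term_mono that by blast
qed

lemma mult_set_Union_chain:
  assumes "\<And>S. S \<in> \<C> \<Longrightarrow> mult_set S" "\<C> \<noteq> {}" "subset.chain \<A> \<C>"
  shows "mult_set (\<Union>\<C>)"
  unfolding mult_set_def
proof (intro conjI ballI)
  fix a b assume "a \<in> \<Union>\<C>" "b \<in> \<Union>\<C>"
  then obtain S where "S \<in> \<C>" "{a, b} \<subseteq> S"
    using finite_subset_Union_chain[of "{a, b}" \<C>] assms(2,3) by auto
  with assms(1) show "a * b \<in> \<Union>\<C>" unfolding mult_set_def by blast
next
  show "1 \<in> \<Union>\<C>" "0 \<notin> \<Union>\<C>"
    using assms(1,2) unfolding mult_set_def by blast+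
qed

definition localizable_wrt :: "('a \<Rightarrow> 'a \<Rightarrow> 'a rterm) \<Rightarrow> ('a::ring_1) set \<Rightarrow> bool" where
  "localizable_wrt f S \<longleftrightarrow> mult_set S \<and> loc_nonzero S \<and>
     (\<forall>t. wf_term S t \<longrightarrow> (\<exists>s\<in>S. \<exists>r. loc_eq S t (f s r)))"

lemma left_localizable_iff: "left_localizable S \<longleftrightarrow> localizable_wrt (\<lambda>s r. TMul (X s) (C r)) S"
  unfolding left_localizable_def localizable_wrt_def ..

lemma right_localizable_iff: "right_localizable S \<longleftrightarrow> localizable_wrt (\<lambda>s r. TMul (C r) (X s)) S"
  unfolding right_localizable_def localizable_wrt_def ..

lemma localizable_wrt_Union_chain:
  assumes loc: "\<And>S. S \<in> \<C> \<Longrightarrow> localizable_wrt f S" and "\<C> \<noteq> {}" and ch: "subset.chain \<A> \<C>"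
  shows "localizable_wrt f (\<Union>\<C>)"
  unfolding localizable_wrt_def
proof (intro conjI allI impI)
  show "mult_set (\<Union>\<C>)"
    using mult_set_Union_chain loc assms(2) ch unfolding localizable_wrt_def by blast
  show "loc_nonzero (\<Union>\<C>)"
    unfolding loc_nonzero_def
  proof
    assume "loc_eq (\<Union>\<C>) TOne TZero"
    then obtain S where "S \<in> \<C>" "loc_eq S TOne TZero"
      using loc_eq_Union_chain assms(2) ch by blast
    with loc show False unfolding localizable_wrt_def loc_nonzero_def by blast
  qed
  fix t assume "wf_term (\<Union>\<C>) t"
  then obtain S where S: "S \<in> \<C>" "wf_term S t"
    using wf_term_Union_chain assms(2) ch by blast
  with loc obtain s r where "s \<in> S" "loc_eq S t (f s r)"
    unfolding localizable_wrt_def by blast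
  with S(1) show "\<exists>s\<in>\<Union>\<C>. \<exists>r. loc_eq (\<Union>\<C>) t (f s r)"
    using loc_eq_mono[of S t "f s r" "\<Union>\<C>"] by blast
qed

lemma Loc_Union_chain:
  assumes "\<C> \<noteq> {}" "subset.chain (Loc k) \<C>"
  shows "\<Union>\<C> \<in> Loc k"
proof -
  have "\<C> \<subseteq> Loc k"
    using assms(2) unfolding subset.chain_def by blast
  moreover have "localizable_wrt f (\<Union>\<C>)" if "\<And>S. S \<in> \<C> \<Longrightarrow> localizable_wrt f S" for f
    using localizable_wrt_Union_chain[OF that assms] .
  ultimately show ?thesis
    by (cases k) (auto simp: Loc_def left_localizable_iff right_localizable_iff subset_iff)
qed

fun rterm_eval :: "('a \<Rightarrow> 'a) \<Rightarrow> ('a::ring_1) rterm \<Rightarrow> 'a" where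
  "rterm_eval i (C r) = r"
| "rterm_eval i (X s) = i s"
| "rterm_eval i TZero = 0"
| "rterm_eval i TOne = 1"
| "rterm_eval i (TAdd a b) = rterm_eval i a + rterm_eval i b"
| "rterm_eval i (TNeg a) = - rterm_eval i a"
| "rterm_eval i (TMul a b) = rterm_eval i a * rterm_eval i b"

lemma rterm_eval_loc_eq:
  assumes "\<And>s. s \<in> S \<Longrightarrow> s * i s = 1 \<and> i s * s = 1"
  shows "loc_eq S a b \<Longrightarrow> rterm_eval i a = rterm_eval i b"
  by (induction rule: loc_eq.induct) (auto simp: algebra_simps assms)

lemma loc_eq_X_inverse:
  assumes "s \<in> S" "s * i s = 1"
  shows "loc_eq S (X s) (C (i s))"
proof -
  have "loc_eq S (X s) (TMul (X s) TOne)"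
    by (rule loc_eq.sym, rule loc_eq.mul_one_r)
  also have "loc_eq S \<dots> (TMul (X s) (C (s * i s)))"
    using assms(2) by (intro loc_eq.cong_mul loc_eq.refl) (simp add: loc_eq.sym loc_eq.C_one)
  also have "loc_eq S \<dots> (TMul (X s) (TMul (C s) (C (i s))))"
    by (intro loc_eq.cong_mul loc_eq.refl loc_eq.C_mul)
  also have "loc_eq S \<dots> (TMul (TMul (X s) (C s)) (C (i s)))"
    by (rule loc_eq.sym, rule loc_eq.mul_assoc)
  also have "loc_eq S \<dots> (TMul TOne (C (i s)))"
    using assms(1) by (intro loc_eq.cong_mul loc_eq.refl loc_eq.inv_l)
  also have "loc_eq S \<dots> (C (i s))"
    by (rule loc_eq.mul_one_l)
  finally show ?thesis .
qed

lemma loc_eq_TNeg_C: "loc_eq S (TNeg (C r)) (C (- r))"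
proof -
  let ?m = "TNeg (C r)" and ?n = "C (- r)"
  have "loc_eq S TZero (C (r + - r))"
    by (simp add: loc_eq.sym loc_eq.C_zero)
  then have zero: "loc_eq S TZero (TAdd (C r) ?n)"
    using loc_eq.C_add loc_eq.trans by blast
  have "loc_eq S ?m (TAdd TZero ?m)"
    by (rule loc_eq.sym, rule loc_eq.add_zero)
  also have "loc_eq S \<dots> (TAdd ?m TZero)"
    by (rule loc_eq.add_comm)
  also have "loc_eq S \<dots> (TAdd ?m (TAdd (C r) ?n))"
    using zero by (intro loc_eq.cong_add loc_eq.refl)
  also have "loc_eq S \<dots> (TAdd (TAdd ?m (C r)) ?n)"
    by (rule loc_eq.sym, rule loc_eq.add_assoc)
  also have "loc_eq S \<dots> (TAdd TZero ?n)"
    by (intro loc_eq.cong_add loc_eq.refl loc_eq.add_neg)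
  also have "loc_eq S \<dots> ?n"
    by (rule loc_eq.add_zero)
  finally show ?thesis .
qed

lemma loc_eq_C_rterm_eval:
  assumes "\<And>s. s \<in> S \<Longrightarrow> s * i s = 1"
  shows "wf_term S t \<Longrightarrow> loc_eq S t (C (rterm_eval i t))"
proof (induction t)
  case (X s)
  then show ?case by (auto intro: loc_eq_X_inverse assms)
next
  case TZero
  show ?case by (simp add: loc_eq.sym loc_eq.C_zero)
next
  case TOne
  show ?case by (simp add: loc_eq.sym loc_eq.C_one)
next
  case (TAdd a b)
  then have "loc_eq S (TAdd a b) (TAdd (C (rterm_eval i a)) (C (rterm_eval i b)))"
    by (auto intro: loc_eq.cong_add)
  then show ?case by (rule loc_eq.trans) (simp add: loc_eq.sym[OF loc_eq.C_add])
next
  case (TMul a b)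
  then have "loc_eq S (TMul a b) (TMul (C (rterm_eval i a)) (C (rterm_eval i b)))"
    by (auto intro: loc_eq.cong_mul)
  then show ?case by (rule loc_eq.trans) (simp add: loc_eq.sym[OF loc_eq.C_mul])
next
  case (TNeg a)
  then have "loc_eq S (TNeg a) (TNeg (C (rterm_eval i a)))"
    by (auto intro: loc_eq.cong_neg)
  then show ?case by (rule loc_eq.trans) (simp add: loc_eq_TNeg_C)
qed (simp add: loc_eq.refl)

lemma loc_eq_X_one: "1 \<in> S \<Longrightarrow> loc_eq S (X 1) TOne"
  using loc_eq.trans[OF loc_eq_X_inverse[of 1 S "\<lambda>_. 1"] loc_eq.C_one] by simp

lemma localizable_wrt_units:
  assumes S: "mult_set S" and inv: "\<And>s. s \<in> S \<Longrightarrow> s * i s = 1 \<and> i s * s = 1"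
    and normal_form: "\<And>r. loc_eq S (C r) (f 1 r)"
  shows "localizable_wrt f S"
  unfolding localizable_wrt_def
proof (intro conjI allI impI)
  have "(1::'a) \<noteq> 0"
    using S unfolding mult_set_def by auto
  then show "loc_nonzero S"
    unfolding loc_nonzero_def using rterm_eval_loc_eq[OF inv, where a = TOne and b = TZero] by auto
  fix t assume "wf_term S t"
  then have "loc_eq S t (C (rterm_eval i t))"
    by (rule loc_eq_C_rterm_eval[rotated]) (use inv in blast)
  then have "loc_eq S t (f 1 (rterm_eval i t))"
    using normal_form by (rule loc_eq.trans)
  moreover have "1 \<in> S"
    using S unfolding mult_set_def by blast
  ultimately show "\<exists>s\<in>S. \<exists>r. loc_eq S t (f s r)" by blast
qed (fact S)

lemma units_in_Loc:
  assumes "mult_set S" and "\<And>s. s \<in> S \<Longrightarrow> s * i s = 1 \<and> i s * s = 1"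
  shows "S \<in> Loc k"
proof -
  have "1 \<in> S"
    using assms(1) unfolding mult_set_def by blast
  then have X_one: "loc_eq S (X 1) TOne"
    by (rule loc_eq_X_one)
  have "loc_eq S (C r) (TMul (X 1) (C r))" for r
    using loc_eq.trans[OF loc_eq.sym[OF loc_eq.mul_one_l]]
      loc_eq.cong_mul[OF loc_eq.sym[OF X_one] loc_eq.refl] by blast
  moreover have "loc_eq S (C r) (TMul (C r) (X 1))" for r
    using loc_eq.trans[OF loc_eq.sym[OF loc_eq.mul_one_r]]
      loc_eq.cong_mul[OF loc_eq.refl loc_eq.sym[OF X_one]] by blast
  ultimately show ?thesis
    using localizable_wrt_units[OF assms]
    by (cases k) (simp_all add: Loc_def left_localizable_iff right_localizable_iff)
qed

theorem theorem1p9: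
  fixes k :: side
  assumes "(0::'a::ring_1) \<noteq> 1"
  shows "max_elems (Loc k :: 'a set set) \<noteq> {}"
proof -
  have "mult_set {1::'a}"
    using assms unfolding mult_set_def by auto
  then have "{1} \<in> (Loc k :: 'a set set)"
    by (rule units_in_Loc[where i = id]) simp
  then have "(Loc k :: 'a set set) \<noteq> {}"
    by blast
  then have "\<exists>M\<in>(Loc k :: 'a set set). \<forall>T\<in>Loc k. M \<subseteq> T \<longrightarrow> T = M"
    by (rule subset_Zorn_nonempty[OF _ Loc_Union_chain])
  then show ?thesis
    unfolding max_elems_def by blast
qed

end
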